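(* For all integers $\ell\ge 5$ and $b\ge 5$ there exists a planar graph $G$ that contains no subgraph isomorphic to $K_4$ or to $B_b$, contains no subgraph isomorphic to $C_k$ for any $5\le k\le \ell$, and is not properly $3$-colorable.
   Context: $K_n$ is the complete graph and $C_n$ the cycle on $n$ vertices. For $n\ge 3$, the book $B_n$ is the graph on $n$ vertices consisting of $n-2$ triangles sharing one common edge. *)

theory Defs
  imports "HOL-Analysis.Analysis"
begin

definition simple_graph :: "'a set \<Rightarrow> 'a set set \<Rightarrow> bool" where
  "simple_graph V E \<longleftrightarrow> finite V \<and>
     (\<forall>e\<in>E. \<exists>u v. u \<noteq> v \<and> u \<in> V \<and> v \<in> V \<and> e = {u, v})"

definition contains_copy :: "'b set \<Rightarrow> 'b set set \<Rightarrow> 'a set \<Rightarrow> 'a set set \<Rightarrow> bool" where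
  "contains_copy VH EH VG EG \<longleftrightarrow>
     (\<exists>f. inj_on f VH \<and> f ` VH \<subseteq> VG \<and> (\<forall>e\<in>EH. f ` e \<in> EG))"

definition K_verts :: "nat \<Rightarrow> nat set" where "K_verts n = {0..<n}"
definition K_edges :: "nat \<Rightarrow> nat set set" where
  "K_edges n = {{i, j} | i j. i < n \<and> j < n \<and> i \<noteq> j}"

definition C_verts :: "nat \<Rightarrow> nat set" where "C_verts n = {0..<n}"
definition C_edges :: "nat \<Rightarrow> nat set set" where
  "C_edges n = {{i, (i + 1) mod n} | i. i < n}"

text \<open>B_n: n-2 triangles sharing the common edge {0,1}.\<close>
definition B_verts :: "nat \<Rightarrow> nat set" where "B_verts n = {0..<n}"
definition B_edges :: "nat \<Rightarrow> nat set set" where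
  "B_edges n = {{0, 1}} \<union> {{0, i} | i. 2 \<le> i \<and> i < n} \<union> {{1, i} | i. 2 \<le> i \<and> i < n}"

definition three_colorable :: "'a set \<Rightarrow> 'a set set \<Rightarrow> bool" where
  "three_colorable V E \<longleftrightarrow>
     (\<exists>c :: 'a \<Rightarrow> nat. (\<forall>v\<in>V. c v < 3) \<and> (\<forall>u v. {u, v} \<in> E \<longrightarrow> c u \<noteq> c v))"

definition planar :: "'a set \<Rightarrow> 'a set set \<Rightarrow> bool" where
  "planar V E \<longleftrightarrow>
     (\<exists>(p :: 'a \<Rightarrow> real \<times> real) (\<gamma> :: 'a set \<Rightarrow> real \<Rightarrow> real \<times> real).
        inj_on p V \<and>
        (\<forall>e\<in>E. \<exists>u v. e = {u, v} \<and> arc (\<gamma> e) \<and> pathstart (\<gamma> e) = p u \<and> pathfinish (\<gamma> e) = p v) \<and>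
        (\<forall>e\<in>E. \<forall>w\<in>V. p w \<in> path_image (\<gamma> e) \<longrightarrow> w \<in> e) \<and>
        (\<forall>e\<in>E. \<forall>e'\<in>E. e \<noteq> e' \<longrightarrow> path_image (\<gamma> e) \<inter> path_image (\<gamma> e') \<subseteq> p ` (e \<inter> e')))"

end

theory Submission
  imports Defs
begin

text \<open>
  The graph is a chain of m diamonds (copies of K4 minus an edge) glued at their tips, closed
  by an edge joining the two ends of the chain. In a proper 3-colouring the two middle vertices
  of a diamond use two colours, so both tips get the third one; hence all tips, in particular
  the two ends, have the same colour and the closing edge is monochromatic.

  Put the tips on the even levels and the middle vertices of a diamond on the odd level between
  its tips. Every edge but the closing one joins vertices at level distance at most one. An
  even level consists of a single cut vertex, so a cycle avoiding the closing edge stays inside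
  one diamond and has at most four vertices, while a cycle through the closing edge must climb
  all 2m levels. Two adjacent vertices and their common neighbours lie in one diamond, so no
  edge is in three triangles, which rules out K4 and the books B_b with b \<ge> 5.
  Planarity is witnessed by drawing the chain along the x-axis and the closing edge below it.
\<close>

lemma contains_copyE:
  assumes "contains_copy VH EH VG EG"
  obtains f where "inj_on f VH" "\<And>x y. {x, y} \<in> EH \<Longrightarrow> {f x, f y} \<in> EG"
  using assms unfolding contains_copy_def by (metis image_empty image_insert)

section \<open>Levels\<close>

text \<open>The tips \<open>3 * i\<close> of the diamonds lie on level \<open>2 * i\<close>, the middle vertices
  \<open>3 * i + 1\<close> and \<open>3 * i + 2\<close> on level \<open>2 * i + 1\<close>.\<close>

definition level :: "nat \<Rightarrow> nat" where
  "level v = (2 * v + 1) div 3"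

lemma level_bounds: "3 * level v \<le> 2 * v + 1" "2 * v + 1 < 3 * level v + 3"
  unfolding level_def using div_mult_mod_eq[of "2 * v + 1" 3] mod_less_divisor[of 3 "2 * v + 1"]
  by linarith+

lemma level_translate: "level (3 * i + a) = 2 * i + level a"
proof -
  have "2 * (3 * i + a) + 1 = (2 * a + 1) + 3 * (2 * i)" by simp
  then show ?thesis unfolding level_def by simp
qed

lemma level_tip: "level (3 * i) = 2 * i"
  using level_translate[of i 0] by (simp add: level_def)

lemma level_even_imp_eq: "level v = 2 * t \<Longrightarrow> v = 3 * t"
  using level_bounds[of v] by linarith

lemma level_between_succ:
  "p \<le> level v \<Longrightarrow> level v \<le> p + 1 \<Longrightarrow> v \<in> {3 * p div 2 .. 3 * p div 2 + 2}"
  using level_bounds[of v] by auto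

lemma level_between_diamond:
  "2 * t \<le> level v \<Longrightarrow> level v \<le> 2 * t + 2 \<Longrightarrow> v \<in> {3 * t .. 3 * t + 3}"
  using level_bounds[of v] by auto

definition level_close :: "nat \<Rightarrow> nat \<Rightarrow> bool" where
  "level_close u v \<longleftrightarrow> level u \<le> level v + 1 \<and> level v \<le> level u + 1"

lemma level_close_refl: "level_close v v"
  unfolding level_close_def by simp

lemma level_close_sym: "level_close u v \<Longrightarrow> level_close v u"
  unfolding level_close_def by simp

lemma card_le_3_if_pairwise_level_close:
  assumes "finite S" and close: "\<And>u v. u \<in> S \<Longrightarrow> v \<in> S \<Longrightarrow> level_close u v"
  shows "card S \<le> 3"
proof (cases "S = {}")
  case False
  then obtain u where u: "u \<in> S" "\<And>v. v \<in> S \<Longrightarrow> level u \<le> level v"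
    using ex_has_least_nat[of "\<lambda>v. v \<in> S" _ level] by blast
  define p where "p = level u"
  have "S \<subseteq> {3 * p div 2 .. 3 * p div 2 + 2}"
  proof
    fix v assume v: "v \<in> S"
    have "p \<le> level v" "level v \<le> p + 1"
      using u(2)[OF v] close[OF u(1) v] unfolding p_def level_close_def by simp_all
    then show "v \<in> {3 * p div 2 .. 3 * p div 2 + 2}" by (rule level_between_succ)
  qed
  then have "card S \<le> card {3 * p div 2 .. 3 * p div 2 + 2}" by (rule card_mono[rotated]) simp
  then show ?thesis by simp
qed simp

lemma card_common_level_close_le_2:
  assumes uv: "level_close u v" "u \<noteq> v" and W: "finite W" "u \<notin> W" "v \<notin> W"
    and common: "\<And>w. w \<in> W \<Longrightarrow> level_close u w \<and> level_close v w"
  shows "card W \<le> 2"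
proof -
  let ?S = "insert u (insert v W)"
  have near: "level_close u x \<and> level_close v x" if "x \<in> ?S" for x
    using that common uv(1) level_close_sym[OF uv(1)] level_close_refl by blast
  obtain t where t: "\<And>x. x \<in> ?S \<Longrightarrow> 2 * t \<le> level x \<and> level x \<le> 2 * t + 2"
  proof (cases "level u = level v")
    case True
    \<comment> \<open>even levels hold a single vertex, so the common level is odd\<close>
    have "odd (level u)"
    proof
      assume "even (level u)"
      then obtain s where "level u = 2 * s" by (rule evenE)
      then show False using True uv(2) level_even_imp_eq by metis
    qed
    then obtain t where t: "level u = 2 * t + 1" by (rule oddE)
    have "2 * t \<le> level x \<and> level x \<le> 2 * t + 2" if "x \<in> ?S" for x
      using near[OF that] t unfolding level_close_def by linarith
    then show ?thesis by (rule that)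
  next
    case False
    define p where "p = min (level u) (level v)"
    have p: "level u = p \<and> level v = p + 1 \<or> level v = p \<and> level u = p + 1"
      using False uv(1) unfolding level_close_def p_def min_def by auto
    have "2 * (p div 2) \<le> p" "p + 1 \<le> 2 * (p div 2) + 2" by presburger+
    moreover have "p \<le> level x \<and> level x \<le> p + 1" if "x \<in> ?S" for x
      using near[OF that] p unfolding level_close_def by linarith
    ultimately have "2 * (p div 2) \<le> level x \<and> level x \<le> 2 * (p div 2) + 2" if "x \<in> ?S" for x
      using that by fastforce
    then show ?thesis by (rule that)
  qed
  have "?S \<subseteq> {3 * t .. 3 * t + 3}" using t level_between_diamond by blast
  then have "card ?S \<le> card {3 * t .. 3 * t + 3}" by (rule card_mono[rotated]) simp
  then show ?thesis using W uv(2) by simp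
qed

section \<open>The diamond chain\<close>

text \<open>Diamond \<open>i\<close> has the vertices \<open>3 * i + a\<close> for \<open>a \<le> 3\<close>; it is \<open>K4\<close> without the
  edge between its tips \<open>3 * i\<close> and \<open>3 * i + 3\<close>.\<close>

definition diamond_pairs :: "(nat \<times> nat) set" where
  "diamond_pairs = {(0, 1), (0, 2), (1, 2), (1, 3), (2, 3)}"

definition diamond_chain_edges :: "nat \<Rightarrow> nat set set" where
  "diamond_chain_edges m =
     insert {0, 3 * m} {{3 * i + a, 3 * i + b} | i a b. i < m \<and> (a, b) \<in> diamond_pairs}"

lemma diamond_chain_edgesE:
  assumes "e \<in> diamond_chain_edges m"
  obtains "e = {0, 3 * m}"
    | i a b where "i < m" "(a, b) \<in> diamond_pairs" "e = {3 * i + a, 3 * i + b}"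
  using assms unfolding diamond_chain_edges_def by blast

lemma diamond_edge_in_chain:
  "i < m \<Longrightarrow> (a, b) \<in> diamond_pairs \<Longrightarrow> {3 * i + a, 3 * i + b} \<in> diamond_chain_edges m"
  unfolding diamond_chain_edges_def by blast

lemma closing_edge_in_chain: "{0, 3 * m} \<in> diamond_chain_edges m"
  unfolding diamond_chain_edges_def by simp

lemma diamond_pair_bounds: "(a, b) \<in> diamond_pairs \<Longrightarrow> a < b \<and> b \<le> 3"
  unfolding diamond_pairs_def by auto

lemma level_close_diamond_pair:
  "(a, b) \<in> diamond_pairs \<Longrightarrow> level_close (3 * i + a) (3 * i + b)"
  unfolding diamond_pairs_def level_close_def level_translate by (auto simp: level_def)

lemma simple_graph_diamond_chain:
  assumes "0 < m"
  shows "simple_graph {0..3 * m} (diamond_chain_edges m)"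
  unfolding simple_graph_def
proof (intro conjI ballI)
  fix e assume "e \<in> diamond_chain_edges m"
  then obtain u v where "u < v" "v \<le> 3 * m" "e = {u, v}"
  proof (cases rule: diamond_chain_edgesE)
    case 1
    then show ?thesis using that[of 0 "3 * m"] assms by simp
  next
    case (2 i a b)
    then show ?thesis using that[of "3 * i + a" "3 * i + b"] diamond_pair_bounds[OF 2(2)] by simp
  qed
  then show "\<exists>u v. u \<noteq> v \<and> u \<in> {0..3 * m} \<and> v \<in> {0..3 * m} \<and> e = {u, v}"
    by (intro exI[of _ u] exI[of _ v]) simp
qed simp

lemma level_close_if_diamond_chain_edge:
  assumes "{u, v} \<in> diamond_chain_edges m" "{u, v} \<noteq> {0, 3 * m}"
  shows "level_close u v"
  using assms(1)
proof (cases rule: diamond_chain_edgesE)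
  case (2 i a b)
  then have "{u, v} = {3 * i + a, 3 * i + b}" by simp
  then consider "u = 3 * i + a" "v = 3 * i + b" | "u = 3 * i + b" "v = 3 * i + a"
    unfolding doubleton_eq_iff by blast
  then show ?thesis
    using level_close_diamond_pair[OF 2(2), of i] level_close_sym[OF level_close_diamond_pair[OF 2(2), of i]]
    by cases simp_all
qed (use assms(2) in simp)

lemma level_close_if_triangle:
  assumes "2 \<le> m" and E: "{u, v} \<in> diamond_chain_edges m" "{u, w} \<in> diamond_chain_edges m"
      "{v, w} \<in> diamond_chain_edges m"
    and "u \<noteq> w" "v \<noteq> w"
  shows "level_close u v"
proof (rule ccontr)
  assume "\<not> level_close u v"
  then have "{u, v} = {0, 3 * m}" using level_close_if_diamond_chain_edge[OF E(1)] by argo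
  then have uv: "u = 0 \<and> v = 3 * m \<or> u = 3 * m \<and> v = 0" by (simp add: doubleton_eq_iff)
  then have "w \<noteq> 0" "w \<noteq> 3 * m" using assms(5,6) by auto
  then have "{u, w} \<noteq> {0, 3 * m}" "{v, w} \<noteq> {0, 3 * m}" by (simp_all add: doubleton_eq_iff)
  then have "level_close u w" "level_close v w"
    using level_close_if_diamond_chain_edge[OF E(2)] level_close_if_diamond_chain_edge[OF E(3)] by argo+
  then have "level_close 0 w" "level_close (3 * m) w" using uv by auto
  then show False using level_tip[of 0] level_tip[of m] \<open>2 \<le> m\<close> unfolding level_close_def by simp
qed

lemma not_three_colorable_diamond_chain:
  assumes "0 < m"
  shows "\<not> three_colorable {0..3 * m} (diamond_chain_edges m)"
proof
  assume "three_colorable {0..3 * m} (diamond_chain_edges m)"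
  then obtain c :: "nat \<Rightarrow> nat" where c: "\<forall>v\<in>{0..3 * m}. c v < 3"
    and proper: "\<And>u v. {u, v} \<in> diamond_chain_edges m \<Longrightarrow> c u \<noteq> c v"
    unfolding three_colorable_def by blast
  \<comment> \<open>the two middle vertices of a diamond use two colours, leaving the third one for both tips\<close>
  have "c (3 * i) = c 0" if "i \<le> m" for i
    using that
  proof (induction i)
    case (Suc i)
    have "{3 * i + a, 3 * i + b} \<in> diamond_chain_edges m" if "(a, b) \<in> diamond_pairs" for a b
      using that Suc.prems diamond_edge_in_chain by simp
    then have "c (3 * i) \<noteq> c (3 * i + 1)" "c (3 * i) \<noteq> c (3 * i + 2)" "c (3 * i + 1) \<noteq> c (3 * i + 2)"
        "c (3 * i + 1) \<noteq> c (3 * i + 3)" "c (3 * i + 2) \<noteq> c (3 * i + 3)"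
      using proper unfolding diamond_pairs_def by (metis add_0_right insertCI)+
    moreover have "c (3 * i) < 3" "c (3 * i + 1) < 3" "c (3 * i + 2) < 3" "c (3 * i + 3) < 3"
      using c Suc.prems by simp_all
    ultimately have "c (3 * i + 3) = c (3 * i)" by linarith
    moreover have "3 * Suc i = 3 * i + 3" by simp
    ultimately show ?case using Suc by (simp add: add.commute)
  qed simp
  then have "c (3 * m) = c 0" by simp
  then show False using proper[OF closing_edge_in_chain] by simp
qed

lemma diamond_chain_no_K4:
  assumes "2 \<le> m"
  shows "\<not> contains_copy (K_verts 4) (K_edges 4) {0..3 * m} (diamond_chain_edges m)"
proof
  assume "contains_copy (K_verts 4) (K_edges 4) {0..3 * m} (diamond_chain_edges m)"
  then obtain f where inj: "inj_on f {0..<4}"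
    and f: "\<And>i j. {i, j} \<in> K_edges 4 \<Longrightarrow> {f i, f j} \<in> diamond_chain_edges m"
    unfolding K_verts_def by (rule contains_copyE) (rule that)
  have E: "{f i, f j} \<in> diamond_chain_edges m" if "i < 4" "j < 4" "i \<noteq> j" for i j
    using that by (intro f) (auto simp: K_edges_def)
  have ne: "f i \<noteq> f j" if "i < 4" "j < 4" "i \<noteq> j" for i j
    using inj that by (auto dest: inj_onD)
  have "level_close (f i) (f j)" if "i < 4" "j < 4" for i j
  proof (cases "i = j")
    case True
    then show ?thesis by (simp add: level_close_refl)
  next
    case False
    have "\<exists>l<4. l \<noteq> i \<and> l \<noteq> j" by presburger
    then obtain l where "l < 4" "l \<noteq> i" "l \<noteq> j" by blast
    then show ?thesis
      using level_close_if_triangle[OF assms E[of i j] E[of i l] E[of j l]] ne that False by simp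
  qed
  then have "card (f ` {0..<4}) \<le> 3" by (intro card_le_3_if_pairwise_level_close) auto
  moreover have "card (f ` {0..<4}) = 4" using inj by (simp add: card_image)
  ultimately show False by simp
qed

lemma diamond_chain_no_book:
  assumes "2 \<le> m" "5 \<le> b"
  shows "\<not> contains_copy (B_verts b) (B_edges b) {0..3 * m} (diamond_chain_edges m)"
proof
  assume "contains_copy (B_verts b) (B_edges b) {0..3 * m} (diamond_chain_edges m)"
  then obtain f where inj: "inj_on f {0..<b}"
    and f: "\<And>i j. {i, j} \<in> B_edges b \<Longrightarrow> {f i, f j} \<in> diamond_chain_edges m"
    unfolding B_verts_def by (rule contains_copyE) (rule that)
  have spine: "{f 0, f 1} \<in> diamond_chain_edges m"
    by (intro f) (simp add: B_edges_def)
  have page: "{f 0, f i} \<in> diamond_chain_edges m" "{f 1, f i} \<in> diamond_chain_edges m"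
    if "2 \<le> i" "i < b" for i
    using that by (intro f; auto simp: B_edges_def)+
  have ne: "f i \<noteq> f j" if "i < b" "j < b" "i \<noteq> j" for i j
    using inj that by (auto dest: inj_onD)
  let ?W = "f ` {2, 3, 4}"
  have "card ?W \<le> 2"
  proof (rule card_common_level_close_le_2)
    show "level_close (f 0) (f 1)"
      using level_close_if_triangle[OF assms(1) spine page[of 2]] ne assms(2) by simp
    show "level_close (f 0) w \<and> level_close (f 1) w" if "w \<in> ?W" for w
    proof -
      from \<open>w \<in> ?W\<close> obtain i where "i \<in> {2, 3, 4}" "w = f i" by blast
      then have i: "2 \<le> i" "i < b" "w = f i" using assms(2) by auto
      have E: "{f i, f 1} \<in> diamond_chain_edges m" "{f 1, f 0} \<in> diamond_chain_edges m"
          "{f i, f 0} \<in> diamond_chain_edges m"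
        using page[OF i(1,2)] spine by (simp_all add: insert_commute)
      have "f 0 \<noteq> f 1" "f i \<noteq> f 0" "f i \<noteq> f 1" using ne i assms(2) by simp_all
      then show ?thesis
        using level_close_if_triangle[OF assms(1) page(1)[OF i(1,2)] spine E(1)]
          level_close_if_triangle[OF assms(1) page(2)[OF i(1,2)] E(2,3)] i(3) by simp
    qed
  qed (use ne assms(2) in auto)
  moreover have "card ?W = 3" using ne assms(2) by simp
  ultimately show False by simp
qed

section \<open>Cycles\<close>

lemma mod_add_left_inj:
  fixes a i j k :: nat
  assumes "i < k" "j < k" "(a + i) mod k = (a + j) mod k"
  shows "i = j"
proof -
  have False if "x < y" "y < k" "(a + x) mod k = (a + y) mod k" for x y
  proof -
    have "k dvd y - x" using that mod_eq_dvd_iff_nat[of "a + x" "a + y" k] by simp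
    then show False using that dvd_imp_le[of k "y - x"] by simp
  qed
  then show ?thesis using assms by (metis linorder_neqE_nat)
qed

lemma abs_diff_le_if_unit_steps:
  fixes g :: "nat \<Rightarrow> int"
  assumes "\<And>i. i < n \<Longrightarrow> \<bar>g (Suc i) - g i\<bar> \<le> 1"
  shows "\<bar>g n - g 0\<bar> \<le> int n"
  using assms
proof (induction n)
  case (Suc n)
  then show ?case using Suc.prems[of n] by fastforce
qed simp

lemma cycle_edge_index_unique:
  assumes inj: "inj_on f {0..<k}" and "3 \<le> k" "i < k" "j < k"
    and "{f i, f (Suc i mod k)} = {f j, f (Suc j mod k)}"
  shows "i = j"
proof (rule ccontr)
  assume "i \<noteq> j"
  have "Suc i mod k < k" "Suc j mod k < k" using assms(2) by simp_all
  then have "i = Suc j mod k" "Suc i mod k = j"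
    using assms(3-5) \<open>i \<noteq> j\<close> inj_onD[OF inj] by (auto simp: doubleton_eq_iff)
  then show False using assms(2-4) by (auto simp: mod_Suc split: if_splits)
qed

text \<open>The even level \<open>2 * s\<close> consists of the single vertex \<open>3 * s\<close>, which a cycle climbing
  above it from below would have to pass twice.\<close>

lemma cycle_stays_below_even_level:
  assumes inj: "inj_on f {0..<k}"
    and close: "\<And>j. j < k \<Longrightarrow> level_close (f j) (f (Suc j mod k))"
    and a: "a < k" "level (f a) < 2 * s" and "x < k"
  shows "level (f x) \<le> 2 * s"
proof (rule ccontr)
  assume high: "\<not> ?thesis"
  have "0 < k" using a(1) by simp
  define g where "g j = int (level (f ((a + j) mod k)))" for j
  have step: "\<bar>g (Suc j) - g j\<bar> \<le> 1" for j
  proof -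
    have "(a + Suc j) mod k = Suc ((a + j) mod k) mod k" by (simp add: mod_Suc_eq)
    then show ?thesis using close[of "(a + j) mod k"] \<open>0 < k\<close> unfolding g_def level_close_def by auto
  qed
  have ends: "g 0 < 2 * s" "g k < 2 * s" using a unfolding g_def by simp_all
  define b where "b = (x + (k - a)) mod k"
  have "(a + b) mod k = x" unfolding b_def using a(1) \<open>x < k\<close> by (simp add: mod_add_right_eq)
  then have gb: "g b > 2 * s" using high unfolding g_def by simp
  have "b < k" unfolding b_def using \<open>0 < k\<close> by simp
  obtain j1 where j1: "j1 \<le> b" "g j1 = 2 * s"
    using nat_intermed_int_val[of 0 b g "2 * s"] step ends gb by auto
  obtain j2 where j2: "b \<le> j2" "j2 \<le> k" "g j2 = 2 * s"
    using nat_intermed_int_val[of b k "\<lambda>j. - g j" "- (2 * s)"] step ends gb \<open>b < k\<close>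
    by (auto simp: abs_minus_commute)
  have "j1 < j2" "j2 < k" using j1 j2 gb ends by (auto simp: le_less)
  have "level (f ((a + j1) mod k)) = 2 * s" "level (f ((a + j2) mod k)) = 2 * s"
    using j1(2) j2(3) unfolding g_def by simp_all
  then have "f ((a + j1) mod k) = f ((a + j2) mod k)" by (metis level_even_imp_eq)
  then have "(a + j1) mod k = (a + j2) mod k" using inj_onD[OF inj] \<open>0 < k\<close> by simp
  then have "j1 = j2" using \<open>j1 < j2\<close> \<open>j2 < k\<close> by (intro mod_add_left_inj[of j1 k j2 a]) simp_all
  then show False using \<open>j1 < j2\<close> by simp
qed

lemma level_close_cycle_in_diamond:
  assumes inj: "inj_on f {0..<k}" and "0 < k"
    and close: "\<And>j. j < k \<Longrightarrow> level_close (f j) (f (Suc j mod k))"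
  obtains t where "f ` {0..<k} \<subseteq> {3 * t .. 3 * t + 3}"
proof -
  obtain a where a: "a < k" "\<And>j. j < k \<Longrightarrow> level (f a) \<le> level (f j)"
    using ex_has_least_nat[of "\<lambda>j. j < k" 0 "\<lambda>j. level (f j)"] \<open>0 < k\<close> by blast
  define t where "t = level (f a) div 2"
  have "level (f a) < 2 * (t + 1)" unfolding t_def by presburger
  have "f ` {0..<k} \<subseteq> {3 * t .. 3 * t + 3}"
  proof
    fix v assume "v \<in> f ` {0..<k}"
    then obtain x where x: "x < k" "v = f x" by auto
    have "2 * t \<le> level (f x)" using a(2)[OF x(1)] unfolding t_def by linarith
    moreover have "level (f x) \<le> 2 * t + 2"
      using cycle_stays_below_even_level[OF inj close a(1) \<open>level (f a) < 2 * (t + 1)\<close> x(1)] by simp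
    ultimately show "v \<in> {3 * t .. 3 * t + 3}" using x(2) level_between_diamond by simp
  qed
  then show ?thesis by (rule that)
qed

lemma cycle_through_closing_edge_long:
  assumes inj: "inj_on f {0..<k}" and "3 \<le> k"
    and E: "\<And>j. j < k \<Longrightarrow> {f j, f (Suc j mod k)} \<in> diamond_chain_edges m"
    and j0: "j0 < k" "{f j0, f (Suc j0 mod k)} = {0, 3 * m}"
  shows "2 * m < k"
proof -
  define g where "g i = int (level (f ((Suc j0 + i) mod k)))" for i
  have step: "\<bar>g (Suc i) - g i\<bar> \<le> 1" if "i < k - 1" for i
  proof -
    define j where "j = (Suc j0 + i) mod k"
    have j: "j < k" "Suc j mod k = (Suc j0 + Suc i) mod k"
      using \<open>3 \<le> k\<close> unfolding j_def by (simp_all add: mod_Suc_eq)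
    have "j \<noteq> j0"
    proof
      assume "j = j0"
      then have "(j0 + Suc i) mod k = (j0 + 0) mod k" using j0(1) unfolding j_def by simp
      then have "Suc i = 0" using that by (intro mod_add_left_inj[of "Suc i" k 0 j0]) simp_all
      then show False by simp
    qed
    then have "{f j, f (Suc j mod k)} \<noteq> {0, 3 * m}"
      using cycle_edge_index_unique[OF inj \<open>3 \<le> k\<close> j(1) j0(1)] j0(2) by auto
    then have "level_close (f j) (f (Suc j mod k))"
      by (rule level_close_if_diamond_chain_edge[OF E[OF j(1)]])
    then show ?thesis using j unfolding g_def j_def level_close_def by auto
  qed
  have "\<bar>g (k - 1) - g 0\<bar> \<le> int (k - 1)" by (rule abs_diff_le_if_unit_steps) (use step in simp)
  moreover have "g (k - 1) = int (level (f j0))"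
    using j0(1) unfolding g_def by (simp add: Suc_diff_1 [symmetric])
  moreover have "g 0 = int (level (f (Suc j0 mod k)))" unfolding g_def by simp
  ultimately show ?thesis using j0(2) \<open>3 \<le> k\<close> level_tip[of 0] level_tip[of m]
    by (auto simp: doubleton_eq_iff)
qed

lemma diamond_chain_no_cycle:
  assumes "5 \<le> k" "k \<le> m"
  shows "\<not> contains_copy (C_verts k) (C_edges k) {0..3 * m} (diamond_chain_edges m)"
proof
  assume "contains_copy (C_verts k) (C_edges k) {0..3 * m} (diamond_chain_edges m)"
  then obtain f where inj: "inj_on f {0..<k}"
    and f: "\<And>i j. {i, j} \<in> C_edges k \<Longrightarrow> {f i, f j} \<in> diamond_chain_edges m"
    unfolding C_verts_def by (rule contains_copyE) (rule that)
  have E: "{f j, f (Suc j mod k)} \<in> diamond_chain_edges m" if "j < k" for j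
    using that by (intro f) (auto simp: C_edges_def)
  show False
  proof (cases "\<exists>j0<k. {f j0, f (Suc j0 mod k)} = {0, 3 * m}")
    case True
    then obtain j0 where j0: "j0 < k" "{f j0, f (Suc j0 mod k)} = {0, 3 * m}" by auto
    have "2 * m < k" by (rule cycle_through_closing_edge_long[OF inj _ E j0]) (use assms in simp)
    then show False using assms by simp
  next
    case False
    then have close: "level_close (f j) (f (Suc j mod k))" if "j < k" for j
      using that by (intro level_close_if_diamond_chain_edge[OF E[OF that]]) auto
    have "0 < k" using assms by simp
    obtain t where "f ` {0..<k} \<subseteq> {3 * t .. 3 * t + 3}"
      by (rule level_close_cycle_in_diamond[OF inj \<open>0 < k\<close> close])
    then have "card (f ` {0..<k}) \<le> card {3 * t .. 3 * t + 3}" by (rule card_mono[rotated]) simp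
    moreover have "card (f ` {0..<k}) = k" using inj by (simp add: card_image)
    ultimately show False using assms by simp
  qed
qed

section \<open>A plane drawing\<close>

text \<open>Diamond \<open>i\<close> is drawn as the rhombus with corners \<open>(2 * i, 0)\<close>, \<open>(2 * i + 1, 1)\<close>,
  \<open>(2 * i + 1, -1)\<close> and \<open>(2 * i + 2, 0)\<close>, its middle vertices joined by a vertical segment.\<close>

definition vertex_point :: "nat \<Rightarrow> real \<times> real" where
  "vertex_point v = (real (level v), if v mod 3 = 1 then 1 else if v mod 3 = 2 then -1 else 0)"

lemma vertex_point_translate: "vertex_point (3 * i + a) = (2 * real i, 0) + vertex_point a"
  unfolding vertex_point_def level_translate by simp

lemma vertex_point_eq_translate_iff:
  "z - (2 * real i, 0) = vertex_point c \<longleftrightarrow> z = vertex_point (3 * i + c)"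
  unfolding vertex_point_translate by (auto simp: algebra_simps)

lemma vertex_point_base:
  "vertex_point 0 = (0, 0)" "vertex_point (Suc 0) = (1, 1)" "vertex_point 1 = (1, 1)"
  "vertex_point 2 = (1, -1)" "vertex_point 3 = (2, 0)"
  by (simp_all add: vertex_point_def level_def)

lemma vertex_point_tip: "vertex_point (3 * i) = (2 * real i, 0)"
  by (simp add: vertex_point_def level_tip)

lemma vertex_point_div_mod: "vertex_point v = (2 * real (v div 3), 0) + vertex_point (v mod 3)"
  using vertex_point_translate[of "v div 3" "v mod 3"] by simp

lemma inj_vertex_point: "inj vertex_point"
proof (rule injI)
  fix v w assume "vertex_point v = vertex_point w"
  then have eq: "(2 * real (v div 3), 0) + vertex_point (v mod 3) = (2 * real (w div 3), 0) + vertex_point (w mod 3)"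
    by (simp only: vertex_point_div_mod[of v] vertex_point_div_mod[of w])
  have "v mod 3 = 0 \<or> v mod 3 = 1 \<or> v mod 3 = 2" "w mod 3 = 0 \<or> w mod 3 = 1 \<or> w mod 3 = 2"
    by linarith+
  then have "v div 3 = w div 3 \<and> v mod 3 = w mod 3"
    using eq by (elim disjE) (simp_all add: vertex_point_base)
  then show "v = w" by (metis mult_div_mod_eq)
qed

definition diamond_segment :: "nat \<Rightarrow> nat \<Rightarrow> real \<times> real \<Rightarrow> bool" where
  "diamond_segment a b z \<longleftrightarrow>
     (a, b) = (0, 1) \<and> snd z = fst z \<and> 0 \<le> fst z \<and> fst z \<le> 1 \<or>
     (a, b) = (0, 2) \<and> snd z = - fst z \<and> 0 \<le> fst z \<and> fst z \<le> 1 \<or>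
     (a, b) = (1, 2) \<and> fst z = 1 \<and> -1 \<le> snd z \<and> snd z \<le> 1 \<or>
     (a, b) = (1, 3) \<and> snd z = 2 - fst z \<and> 1 \<le> fst z \<and> fst z \<le> 2 \<or>
     (a, b) = (2, 3) \<and> snd z = fst z - 2 \<and> 1 \<le> fst z \<and> fst z \<le> 2"

lemma closed_segment_Pair_iff:
  fixes x1 y1 x2 y2 :: real
  shows "z \<in> closed_segment (x1, y1) (x2, y2) \<longleftrightarrow>
    (\<exists>u. 0 \<le> u \<and> u \<le> 1 \<and> z = ((1 - u) * x1 + u * x2, (1 - u) * y1 + u * y2))"
  by (auto simp: closed_segment_def)

lemma closed_segment_diamond_pair:
  assumes "(a, b) \<in> diamond_pairs"
  shows "z \<in> closed_segment (vertex_point a) (vertex_point b) \<longleftrightarrow> diamond_segment a b z"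
proof -
  obtain x y where z: "z = (x, y)" by fastforce
  from assms consider "a = 0" "b = 1" | "a = 0" "b = 2" | "a = 1" "b = 2" | "a = 1" "b = 3"
    | "a = 2" "b = 3" unfolding diamond_pairs_def by blast
  then show ?thesis
  proof cases
    case 1
    then show ?thesis unfolding 1 z vertex_point_base diamond_segment_def closed_segment_Pair_iff
      by (auto simp: algebra_simps intro!: exI[of _ x])
  next
    case 2
    then show ?thesis unfolding 2 z vertex_point_base diamond_segment_def closed_segment_Pair_iff
      by (auto simp: algebra_simps intro!: exI[of _ x])
  next
    case 3
    then show ?thesis unfolding 3 z vertex_point_base diamond_segment_def closed_segment_Pair_iff
      by (auto simp: algebra_simps intro!: exI[of _ "(1 - y) / 2"]; simp add: field_simps)
  next
    case 4
    then show ?thesis unfolding 4 z vertex_point_base diamond_segment_def closed_segment_Pair_iff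
      by (auto simp: algebra_simps intro!: exI[of _ "x - 1"])
  next
    case 5
    then show ?thesis unfolding 5 z vertex_point_base diamond_segment_def closed_segment_Pair_iff
      by (auto simp: algebra_simps intro!: exI[of _ "x - 1"])
  qed
qed

lemma diamond_segment_bounds:
  "diamond_segment a b z \<Longrightarrow> 0 \<le> fst z \<and> fst z \<le> 2 \<and> -1 \<le> snd z \<and> snd z \<le> 1"
  unfolding diamond_segment_def by auto

lemma diamond_segment_left_end:
  "diamond_segment a b z \<Longrightarrow> fst z = 0 \<Longrightarrow> a = 0 \<and> z = vertex_point 0"
  unfolding diamond_segment_def by (auto simp: vertex_point_base prod_eq_iff)

lemma diamond_segment_right_end:
  "diamond_segment a b z \<Longrightarrow> fst z = 2 \<Longrightarrow> b = 3 \<and> z = vertex_point 3"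
  unfolding diamond_segment_def by (auto simp: vertex_point_base prod_eq_iff)

lemma diamond_segment_vertex:
  assumes "c \<le> 3" "diamond_segment a b (vertex_point c)"
  shows "c = a \<or> c = b"
proof -
  have "c = 0 \<or> c = 1 \<or> c = 2 \<or> c = 3" using assms(1) by auto
  then show ?thesis using assms(2) unfolding diamond_segment_def
    by (elim disjE) (simp_all add: vertex_point_def level_def)
qed

lemma diamond_segments_meet:
  assumes "diamond_segment a b z" "diamond_segment a' b' z" "(a, b) \<noteq> (a', b')"
  shows "z = vertex_point a \<or> z = vertex_point b"
  using assms unfolding diamond_segment_def by (auto simp: vertex_point_base prod_eq_iff)

lemma diamond_edge_segment_iff:
  assumes "(a, b) \<in> diamond_pairs"
  shows "z \<in> closed_segment (vertex_point (3 * i + a)) (vertex_point (3 * i + b)) \<longleftrightarrow>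
    diamond_segment a b (z - (2 * real i, 0))"
proof -
  let ?d = "(2 * real i, 0 :: real)"
  have "z \<in> closed_segment (vertex_point (3 * i + a)) (vertex_point (3 * i + b)) \<longleftrightarrow>
      ?d + (z - ?d) \<in> closed_segment (?d + vertex_point a) (?d + vertex_point b)"
    by (simp add: vertex_point_translate)
  also have "\<dots> \<longleftrightarrow> z - ?d \<in> closed_segment (vertex_point a) (vertex_point b)"
    by (rule closed_segment_translation_eq)
  finally show ?thesis using closed_segment_diamond_pair[OF assms] by simp
qed

lemma vertex_on_diamond_edge:
  assumes ab: "(a, b) \<in> diamond_pairs"
    and on: "vertex_point w \<in> closed_segment (vertex_point (3 * i + a)) (vertex_point (3 * i + b))"
  shows "w = 3 * i + a \<or> w = 3 * i + b"
proof -
  have seg: "diamond_segment a b (vertex_point w - (2 * real i, 0))"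
    using on diamond_edge_segment_iff[OF ab] by simp
  then have "2 * real i \<le> real (level w)" "real (level w) \<le> 2 * real i + 2"
    using diamond_segment_bounds[OF seg] by (simp_all add: vertex_point_def)
  then have "w \<in> {3 * i .. 3 * i + 3}" by (intro level_between_diamond) linarith+
  then obtain c where c: "c \<le> 3" "w = 3 * i + c" by (metis atLeastAtMost_iff le_add_diff_inverse add_le_cancel_left)
  then have "vertex_point w - (2 * real i, 0) = vertex_point c"
    using vertex_point_eq_translate_iff by blast
  then show ?thesis using diamond_segment_vertex[OF c(1)] seg c(2) by auto
qed

lemma diamond_edges_in_distinct_diamonds_meet:
  assumes ab: "(a, b) \<in> diamond_pairs" and ab': "(a', b') \<in> diamond_pairs" and "i < i'"
    and z: "z \<in> closed_segment (vertex_point (3 * i + a)) (vertex_point (3 * i + b))"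
      "z \<in> closed_segment (vertex_point (3 * i' + a')) (vertex_point (3 * i' + b'))"
  shows "z = vertex_point (3 * i + b) \<and> 3 * i + b = 3 * i' + a'"
proof -
  have seg: "diamond_segment a b (z - (2 * real i, 0))" "diamond_segment a' b' (z - (2 * real i', 0))"
    using z diamond_edge_segment_iff[OF ab] diamond_edge_segment_iff[OF ab'] by simp_all
  have "fst z \<le> 2 * real i + 2" "2 * real i' \<le> fst z"
    using diamond_segment_bounds[OF seg(1)] diamond_segment_bounds[OF seg(2)] by simp_all
  then have "i' = i + 1" "fst z = 2 * real i + 2" using \<open>i < i'\<close> by linarith+
  then have "b = 3 \<and> z - (2 * real i, 0) = vertex_point 3" "a' = 0"
    using diamond_segment_right_end[OF seg(1)] diamond_segment_left_end[OF seg(2)] by simp_all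
  then show ?thesis using \<open>i' = i + 1\<close> vertex_point_eq_translate_iff by auto
qed

lemma diamond_edges_meet:
  assumes ab: "(a, b) \<in> diamond_pairs" and ab': "(a', b') \<in> diamond_pairs"
    and ne: "(i, a, b) \<noteq> (i', a', b')"
    and z: "z \<in> closed_segment (vertex_point (3 * i + a)) (vertex_point (3 * i + b))"
      "z \<in> closed_segment (vertex_point (3 * i' + a')) (vertex_point (3 * i' + b'))"
  shows "z \<in> vertex_point ` ({3 * i + a, 3 * i + b} \<inter> {3 * i' + a', 3 * i' + b'})"
proof (cases i i' rule: linorder_cases)
  case equal
  have seg: "diamond_segment a b (z - (2 * real i, 0))" "diamond_segment a' b' (z - (2 * real i, 0))"
    using z diamond_edge_segment_iff[OF ab] diamond_edge_segment_iff[OF ab'] equal by simp_all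
  then obtain c where c: "c \<in> {a, b}" "z - (2 * real i, 0) = vertex_point c"
    using diamond_segments_meet[OF seg] ne equal by auto
  have "c \<le> 3" using c(1) diamond_pair_bounds[OF ab] by auto
  then have "c \<in> {a', b'}" using diamond_segment_vertex seg(2) c(2) by auto
  then show ?thesis using c equal vertex_point_eq_translate_iff by auto
next
  case less
  then show ?thesis using diamond_edges_in_distinct_diamonds_meet[OF ab ab' less z] by auto
next
  case greater
  then show ?thesis using diamond_edges_in_distinct_diamonds_meet[OF ab' ab greater z(2,1)] by auto
qed

definition closing_path :: "nat \<Rightarrow> real \<Rightarrow> real \<times> real" where
  "closing_path m = linepath (0, 0) (0, -2) +++ linepath (0, -2) (2 * real m, -2)
     +++ linepath (2 * real m, -2) (2 * real m, 0)"

lemma in_closed_segment_PairD: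
  "z \<in> closed_segment (x1, y1) (x2, y2) \<Longrightarrow>
    fst z \<in> closed_segment x1 x2 \<and> snd z \<in> closed_segment y1 y2"
  by (cases z) (auto dest: closed_segment_PairD)

lemma path_image_closing_path:
  "path_image (closing_path m) \<subseteq> {z. snd z \<le> 0 \<and> (fst z = 0 \<or> fst z = 2 * real m \<or> snd z = -2)}"
  unfolding closing_path_def
  by (auto simp: path_image_join closed_segment_eq_real_ivl dest!: in_closed_segment_PairD)

lemma arc_closing_path:
  assumes "0 < m"
  shows "arc (closing_path m)"
proof -
  let ?L1 = "linepath (0, 0) (0, -2 :: real)"
  let ?L2 = "linepath (0, -2) (2 * real m, -2 :: real)"
  let ?L3 = "linepath (2 * real m, -2) (2 * real m, 0 :: real)"
  have "arc (?L2 +++ ?L3)"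
  proof (rule arc_join)
    show "path_image ?L2 \<inter> path_image ?L3 \<subseteq> {pathstart ?L3}"
      by (auto simp: closed_segment_eq_real_ivl prod_eq_iff dest!: in_closed_segment_PairD)
  qed (use assms in auto)
  then show ?thesis
    unfolding closing_path_def
  proof (rule arc_join[rotated])
    show "path_image ?L1 \<inter> path_image (?L2 +++ ?L3) \<subseteq> {pathstart (?L2 +++ ?L3)}"
      using assms
      by (auto simp: path_image_join closed_segment_eq_real_ivl prod_eq_iff dest!: in_closed_segment_PairD)
  qed auto
qed

lemma vertex_on_closing_path:
  assumes "vertex_point w \<in> path_image (closing_path m)"
  shows "w = 0 \<or> w = 3 * m"
proof -
  have "snd (vertex_point w) \<noteq> -2" by (simp add: vertex_point_def)
  then have "level w = 2 * 0 \<or> level w = 2 * m"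
    using assms path_image_closing_path by (force simp: vertex_point_def)
  then show ?thesis using level_even_imp_eq[of w 0] level_even_imp_eq[of w m] by auto
qed

lemma closing_path_meets_diamond_edge:
  assumes ab: "(a, b) \<in> diamond_pairs" and "i < m"
    and z: "z \<in> path_image (closing_path m)"
      "z \<in> closed_segment (vertex_point (3 * i + a)) (vertex_point (3 * i + b))"
  shows "z \<in> vertex_point ` ({0, 3 * m} \<inter> {3 * i + a, 3 * i + b})"
proof -
  have seg: "diamond_segment a b (z - (2 * real i, 0))"
    using z(2) diamond_edge_segment_iff[OF ab] by simp
  note bounds = diamond_segment_bounds[OF seg]
  then have "fst z = 0 \<or> fst z = 2 * real m" using z(1) path_image_closing_path by force
  then show ?thesis
  proof
    assume "fst z = 0"
    then have "i = 0" "fst (z - (2 * real i, 0)) = 0" using bounds by simp_all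
    then have "a = 0" "z = vertex_point 0"
      using diamond_segment_left_end[OF seg] vertex_point_eq_translate_iff[of z i 0] by simp_all
    then show ?thesis using \<open>i = 0\<close> by auto
  next
    assume "fst z = 2 * real m"
    then have shift: "fst (z - (2 * real i, 0)) = 2 * real m - 2 * real i" by simp
    then have "m = i + 1" using bounds \<open>i < m\<close> by linarith
    then have "fst (z - (2 * real i, 0)) = 2" using shift by simp
    then have "b = 3" "z = vertex_point (3 * i + 3)"
      using diamond_segment_right_end[OF seg] vertex_point_eq_translate_iff[of z i 3] by simp_all
    then show ?thesis using \<open>m = i + 1\<close> by auto
  qed
qed

definition edge_curve :: "nat \<Rightarrow> nat set \<Rightarrow> real \<Rightarrow> real \<times> real" where
  "edge_curve m e = (if e = {0, 3 * m} then closing_path m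
     else linepath (vertex_point (Min e)) (vertex_point (Max e)))"

lemma edge_curve_closing: "edge_curve m {0, 3 * m} = closing_path m"
  unfolding edge_curve_def by simp

lemma edge_curve_diamond:
  assumes "2 \<le> m" "(a, b) \<in> diamond_pairs"
  shows "edge_curve m {3 * i + a, 3 * i + b} = linepath (vertex_point (3 * i + a)) (vertex_point (3 * i + b))"
proof -
  have "a < b" "b \<le> 3" using diamond_pair_bounds[OF assms(2)] by simp_all
  then have "{3 * i + a, 3 * i + b} \<noteq> {0, 3 * m}" using assms(1) by (auto simp: doubleton_eq_iff)
  then show ?thesis unfolding edge_curve_def using \<open>a < b\<close> by simp
qed

lemma arc_edge_curve:
  assumes "2 \<le> m" "e \<in> diamond_chain_edges m"
  shows "\<exists>u v. e = {u, v} \<and> arc (edge_curve m e) \<and> pathstart (edge_curve m e) = vertex_point u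
    \<and> pathfinish (edge_curve m e) = vertex_point v"
  using assms(2)
proof (cases rule: diamond_chain_edgesE)
  case 1
  have "vertex_point 0 = (0, 0)" "vertex_point (3 * m) = (2 * real m, 0)"
    using vertex_point_tip[of 0] vertex_point_tip[of m] by simp_all
  then show ?thesis using 1 arc_closing_path assms(1) edge_curve_closing
    by (intro exI[of _ 0] exI[of _ "3 * m"]) (simp add: closing_path_def)
next
  case (2 i a b)
  have "vertex_point (3 * i + a) \<noteq> vertex_point (3 * i + b)"
    using inj_vertex_point diamond_pair_bounds[OF 2(2)] by (auto dest: injD)
  then show ?thesis using 2 edge_curve_diamond[OF assms(1) 2(2)]
    by (intro exI[of _ "3 * i + a"] exI[of _ "3 * i + b"]) simp
qed

lemma vertex_on_edge_curve:
  assumes "2 \<le> m" "e \<in> diamond_chain_edges m" "vertex_point w \<in> path_image (edge_curve m e)"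
  shows "w \<in> e"
  using assms(2,3) vertex_on_closing_path vertex_on_diamond_edge edge_curve_closing
    edge_curve_diamond[OF assms(1)]
  by (cases rule: diamond_chain_edgesE) auto

lemma edge_curves_meet:
  assumes "2 \<le> m" and e: "e \<in> diamond_chain_edges m" and e': "e' \<in> diamond_chain_edges m"
    and "e \<noteq> e'"
  shows "path_image (edge_curve m e) \<inter> path_image (edge_curve m e') \<subseteq> vertex_point ` (e \<inter> e')"
proof
  fix z assume z: "z \<in> path_image (edge_curve m e) \<inter> path_image (edge_curve m e')"
  note curves = edge_curve_closing edge_curve_diamond[OF assms(1)]
  from e show "z \<in> vertex_point ` (e \<inter> e')"
  proof (cases rule: diamond_chain_edgesE)
    case 1
    from e' show ?thesis
    proof (cases rule: diamond_chain_edgesE)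
      case 1
      then show ?thesis using \<open>e \<noteq> e'\<close> \<open>e = {0, 3 * m}\<close> by simp
    next
      case (2 i a b)
      then show ?thesis using closing_path_meets_diamond_edge[of a b i m z] z curves
        \<open>e = {0, 3 * m}\<close> by simp
    qed
  next
    case (2 i a b)
    note e_diamond = this
    from e' show ?thesis
    proof (cases rule: diamond_chain_edgesE)
      case 1
      then show ?thesis using closing_path_meets_diamond_edge[of a b i m z] z curves e_diamond
        by (simp add: Int_commute)
    next
      case (2 i' a' b')
      then have "(i, a, b) \<noteq> (i', a', b')" using e_diamond \<open>e \<noteq> e'\<close> by auto
      then show ?thesis using diamond_edges_meet[of a b a' b' i i' z] z curves e_diamond 2 by simp
    qed
  qed
qed

lemma planar_diamond_chain:
  assumes "2 \<le> m"
  shows "planar {0..3 * m} (diamond_chain_edges m)"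
  unfolding planar_def
proof (intro exI[of _ vertex_point] exI[of _ "edge_curve m"] conjI ballI impI)
  show "inj_on vertex_point {0..3 * m}" using inj_vertex_point by (simp add: inj_on_def inj_def)
qed (use assms arc_edge_curve vertex_on_edge_curve edge_curves_meet in auto)

theorem mainTheorem3:
  fixes l b :: nat
  assumes "l \<ge> 5" and "b \<ge> 5"
  shows "\<exists>(V :: nat set) E. simple_graph V E \<and> planar V E \<and>
           \<not> contains_copy (K_verts 4) (K_edges 4) V E \<and>
           \<not> contains_copy (B_verts b) (B_edges b) V E \<and>
           (\<forall>k. 5 \<le> k \<and> k \<le> l \<longrightarrow> \<not> contains_copy (C_verts k) (C_edges k) V E) \<and>
           \<not> three_colorable V E"
proof (intro exI[of _ "{0..3 * l}"] exI[of _ "diamond_chain_edges l"] conjI allI impI)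
  have l: "2 \<le> l" "0 < l" using assms(1) by simp_all
  show "simple_graph {0..3 * l} (diamond_chain_edges l)" by (rule simple_graph_diamond_chain[OF l(2)])
  show "planar {0..3 * l} (diamond_chain_edges l)" by (rule planar_diamond_chain[OF l(1)])
  show "\<not> contains_copy (K_verts 4) (K_edges 4) {0..3 * l} (diamond_chain_edges l)"
    by (rule diamond_chain_no_K4[OF l(1)])
  show "\<not> contains_copy (B_verts b) (B_edges b) {0..3 * l} (diamond_chain_edges l)"
    by (rule diamond_chain_no_book[OF l(1) assms(2)])
  show "\<not> three_colorable {0..3 * l} (diamond_chain_edges l)"
    by (rule not_three_colorable_diamond_chain[OF l(2)])
  fix k assume "5 \<le> k \<and> k \<le> l"
  then show "\<not> contains_copy (C_verts k) (C_edges k) {0..3 * l} (diamond_chain_edges l)"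
    by (intro diamond_chain_no_cycle) simp_all
qed

end
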